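(* Let $G\in[0,1]^{Q\times Q}$ be a stochastic matrix ($G\vec 1=\vec 1$) over a finite set $Q$ such that the directed graph of $G$ (edge $p\to q$ iff $G[p,q]>0$) has exactly one bottom strongly connected component, and let $y_{\min}$ be the smallest nonzero entry of $G$. Let $\vec r\in\mathbb{R}^Q$ and $\vec f(n)=\sum_{i=0}^{n-1}G^i\vec r$ for $n\in\mathbb{N}$. For $\vec v\in\mathbb{R}^Q$ put $|\vec v|_{\mathit{diff}}=\max_{p_1,p_2\in Q}|\vec v[p_1]-\vec v[p_2]|$. Then $|\vec f(n)|_{\mathit{diff}}\le C\,|\vec r|_{\mathit{diff}}$ for all $n\in\mathbb{N}$, where $C=10|Q|/y_{\min}^{|Q|}$.
   Context: Bottom strongly connected component: a strongly connected component of the graph with no edges leaving it. *)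

theory Defs
  imports "HOL-Analysis.Analysis"
begin

definition mat_edge :: "real^'q^'q \<Rightarrow> 'q \<Rightarrow> 'q \<Rightarrow> bool" where
  "mat_edge G p q \<longleftrightarrow> G $ p $ q > 0"

definition is_scc :: "('q \<Rightarrow> 'q \<Rightarrow> bool) \<Rightarrow> 'q set \<Rightarrow> bool" where
  "is_scc E S \<longleftrightarrow> S \<noteq> {} \<and> (\<forall>p\<in>S. \<forall>q\<in>S. E\<^sup>*\<^sup>* p q) \<and>
     (\<forall>p\<in>S. \<forall>q. E\<^sup>*\<^sup>* p q \<and> E\<^sup>*\<^sup>* q p \<longrightarrow> q \<in> S)"

definition is_bscc :: "('q \<Rightarrow> 'q \<Rightarrow> bool) \<Rightarrow> 'q set \<Rightarrow> bool" where
  "is_bscc E S \<longleftrightarrow> is_scc E S \<and> (\<forall>p\<in>S. \<forall>q. E p q \<longrightarrow> q \<in> S)"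

definition stochastic :: "real^'q^'q \<Rightarrow> bool" where
  "stochastic G \<longleftrightarrow> (\<forall>p q. 0 \<le> G $ p $ q \<and> G $ p $ q \<le> 1) \<and> G *v (\<chi> p. 1) = (\<chi> p. 1)"

definition matpow :: "real^'q^'q \<Rightarrow> nat \<Rightarrow> real^'q^'q" where
  "matpow G i = (((**) G) ^^ i) (mat 1)"

definition diff_norm :: "real^'q::finite \<Rightarrow> real" where
  "diff_norm v = Max {\<bar>v $ p1 - v $ p2\<bar> | p1 p2. True}"

definition ymin :: "real^'q::finite^'q \<Rightarrow> real" where
  "ymin G = Min {G $ p $ q | p q. G $ p $ q \<noteq> 0}"

end

theory Submission
  imports Defs
begin

text \<open>Since the bottom SCC is unique, some state \<open>s\<close> is reachable from every state.
  Following paths to \<open>s\<close> shows that from any state the chain hits \<open>s\<close> within \<open>|Q|\<close> steps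
  with probability at least \<open>y\<^sub>m\<^sub>i\<^sub>n ^ |Q|\<close>, so the expected hitting time of \<open>s\<close> is at
  most \<open>|Q| / y\<^sub>m\<^sub>i\<^sub>n ^ |Q|\<close>. The deviation \<open>f(n)[p] - f(n)[s]\<close> obeys the recursion of the
  chain killed at \<open>s\<close>, forced by terms of size at most \<open>|r|\<^sub>d\<^sub>i\<^sub>f\<^sub>f\<close>, hence is at most
  \<open>|r|\<^sub>d\<^sub>i\<^sub>f\<^sub>f\<close> times that expected hitting time.\<close>

lemma matpow_0 [simp]: "matpow G 0 = mat 1"
  by (simp add: matpow_def)

lemma matpow_Suc_mult_vec: "matpow G (Suc k) *v v = G *v (matpow G k *v v)"
  by (simp add: matpow_def matrix_vector_mul_assoc)

lemma sum_matpow_Suc_mult_vec: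
  "(\<Sum>i<Suc n. matpow G i *v r) = r + G *v (\<Sum>i<n. matpow G i *v r)"
  unfolding sum.lessThan_Suc_shift by (simp add: matpow_Suc_mult_vec vec.sum)

lemma matrix_vector_mult_component: "(A *v v) $ p = (\<Sum>q\<in>UNIV. A $ p $ q * v $ q)"
  by (simp add: matrix_vector_mult_def)

lemma nonneg_matrix_mult_vec_mono:
  fixes A :: "real^'n::finite^'m"
  assumes "\<And>p q. 0 \<le> A $ p $ q" and "\<And>q. v $ q \<le> w $ q"
  shows "(A *v v) $ p \<le> (A *v w) $ p"
  unfolding matrix_vector_mult_def using assms by (auto intro!: sum_mono mult_left_mono)

lemma abs_nonneg_matrix_mult_vec_le:
  fixes A :: "real^'n::finite^'m"
  assumes "\<And>p q. 0 \<le> A $ p $ q" and "\<And>q. \<bar>v $ q\<bar> \<le> w $ q"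
  shows "\<bar>(A *v v) $ p\<bar> \<le> (A *v w) $ p"
  unfolding matrix_vector_mult_def using assms
  by (auto simp: abs_mult intro!: order_trans[OF sum_abs] sum_mono mult_left_mono)

lemma reaches_bscc:
  fixes E :: "'q::finite \<Rightarrow> 'q \<Rightarrow> bool"
  obtains S s where "is_bscc E S" and "s \<in> S" and "E\<^sup>*\<^sup>* p s"
proof -
  define R where "R x = {z. E\<^sup>*\<^sup>* x z}" for x
  obtain q where q: "E\<^sup>*\<^sup>* p q" and q_min: "\<And>q'. E\<^sup>*\<^sup>* p q' \<Longrightarrow> card (R q) \<le> card (R q')"
    using ex_has_least_nat[of "\<lambda>q. E\<^sup>*\<^sup>* p q" p "\<lambda>q. card (R q)"] by auto
  have returns: "E\<^sup>*\<^sup>* x q" if "E\<^sup>*\<^sup>* q x" for x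
  proof -
    have "R x \<subseteq> R q" using that unfolding R_def by (auto intro: rtranclp_trans)
    moreover have "card (R q) \<le> card (R x)" using q_min q that by (meson rtranclp_trans)
    ultimately have "R x = R q" by (metis antisym card_mono card_subset_eq finite)
    then show ?thesis unfolding R_def by auto
  qed
  have "is_bscc E (R q)"
    unfolding is_bscc_def is_scc_def R_def
    using returns by (auto intro: rtranclp_trans rtranclp.rtrancl_into_rtrancl)
  then show thesis using that q unfolding R_def by blast
qed

lemma unique_bscc_reachable:
  fixes E :: "'q::finite \<Rightarrow> 'q \<Rightarrow> bool"
  assumes "\<exists>!S. is_bscc E S"
  obtains s where "\<And>p. E\<^sup>*\<^sup>* p s"
proof -
  obtain S0 where S0: "is_bscc E S0" and unique: "\<And>S. is_bscc E S \<Longrightarrow> S = S0"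
    using assms by blast
  obtain s where s: "s \<in> S0" using S0 unfolding is_bscc_def is_scc_def by blast
  have "E\<^sup>*\<^sup>* p s" for p
  proof -
    obtain S t where "is_bscc E S" "t \<in> S" "E\<^sup>*\<^sup>* p t" by (rule reaches_bscc)
    with unique S0 s show ?thesis unfolding is_bscc_def is_scc_def by (metis rtranclp_trans)
  qed
  then show thesis by (rule that)
qed

lemma diff_norm_eq_Max_image: "diff_norm v = Max ((\<lambda>(p, q). \<bar>v $ p - v $ q\<bar>) ` UNIV)"
  unfolding diff_norm_def by (rule arg_cong[where f = Max]) auto

lemma abs_diff_le_diff_norm: "\<bar>v $ p - v $ q\<bar> \<le> diff_norm v"
  unfolding diff_norm_eq_Max_image by (rule Max_ge) auto

lemma diff_norm_nonneg: "0 \<le> diff_norm v"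
  using abs_diff_le_diff_norm[of v p p for p] by simp

lemma diff_norm_le: "(\<And>p q. \<bar>v $ p - v $ q\<bar> \<le> d) \<Longrightarrow> diff_norm v \<le> d"
  unfolding diff_norm_eq_Max_image by (subst Max_le_iff) auto

lemma stochastic_nonneg: "stochastic G \<Longrightarrow> 0 \<le> G $ p $ q"
  by (simp add: stochastic_def)

lemma stochastic_row_sum:
  assumes "stochastic G"
  shows "(\<Sum>q\<in>UNIV. G $ p $ q) = 1"
proof -
  have "(G *v (\<chi> p. 1)) $ p = 1" using assms by (simp add: stochastic_def)
  then show ?thesis by (simp add: matrix_vector_mult_def)
qed

lemma finite_nonzero_entries: "finite {G $ p $ q | p q. G $ p $ q \<noteq> (0::real)}"
  by (rule finite_subset[of _ "(\<lambda>(p, q). G $ p $ q) ` UNIV"]) auto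

lemma ymin_le: "G $ p $ q \<noteq> 0 \<Longrightarrow> ymin G \<le> G $ p $ q"
  unfolding ymin_def by (rule Min_le[OF finite_nonzero_entries]) auto

lemma stochastic_has_nonzero_entry:
  assumes "stochastic G"
  obtains p q where "G $ p $ q \<noteq> 0"
  using stochastic_row_sum[OF assms, of undefined] by (metis sum.neutral zero_neq_one)

lemma stochastic_ymin_pos:
  assumes "stochastic G"
  shows "0 < ymin G"
proof -
  obtain p q where "G $ p $ q \<noteq> 0" using assms by (rule stochastic_has_nonzero_entry)
  then show ?thesis
    unfolding ymin_def using finite_nonzero_entries stochastic_nonneg[OF assms]
    by (subst Min_gr_iff) (auto simp: order_le_neq_trans)
qed

lemma stochastic_ymin_le_one:
  assumes "stochastic G"
  shows "ymin G \<le> 1"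
proof -
  obtain p q where "G $ p $ q \<noteq> 0" using assms by (rule stochastic_has_nonzero_entry)
  then show ?thesis using ymin_le assms unfolding stochastic_def by (meson order_trans)
qed

lemma stochastic_mult_vec_dist:
  assumes "stochastic G" and "\<And>q. \<bar>c - v $ q\<bar> \<le> d"
  shows "\<bar>c - (G *v v) $ p\<bar> \<le> d"
proof -
  have "c - (G *v v) $ p = (\<Sum>q\<in>UNIV. G $ p $ q * (c - v $ q))"
    using stochastic_row_sum[OF assms(1)]
    by (simp add: matrix_vector_mult_def right_diff_distrib sum_subtractf flip: sum_distrib_right)
  also have "\<bar>\<dots>\<bar> \<le> (\<Sum>q\<in>UNIV. G $ p $ q * d)"
    using assms stochastic_nonneg[OF assms(1)]
    by (auto simp: abs_mult intro!: order_trans[OF sum_abs] sum_mono mult_left_mono)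
  also have "\<dots> = d"
    using stochastic_row_sum[OF assms(1)] by (simp flip: sum_distrib_right)
  finally show ?thesis .
qed

lemma stochastic_matpow_mult_vec_dist:
  assumes "stochastic G"
  shows "\<bar>r $ p - (matpow G n *v r) $ q\<bar> \<le> diff_norm r"
proof (induction n arbitrary: q)
  case 0
  show ?case by (simp add: abs_diff_le_diff_norm)
next
  case (Suc n)
  show ?case
    unfolding matpow_Suc_mult_vec using assms Suc by (rule stochastic_mult_vec_dist)
qed

lemma sum_le_of_periodic_decay:
  fixes a :: "nat \<Rightarrow> real"
  assumes "\<And>k. 0 \<le> a k" and "\<And>k. a k \<le> 1" and "\<And>k. a (k + m) \<le> c * a k"
    and "0 < m" and "0 \<le> c" and "c < 1"
  shows "(\<Sum>k<n. a k) \<le> m / (1 - c)"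
proof (induction n rule: less_induct)
  case (less n)
  have block: "(\<Sum>k<l. a k) \<le> l" for l
    using sum_mono[of "{..<l}" a "\<lambda>_. 1"] assms(2) by simp
  have m_le: "real m \<le> m / (1 - c)"
    using assms(5,6) by (simp add: le_divide_eq mult_left_le)
  show ?case
  proof (cases "n \<le> m")
    case True
    then show ?thesis using block[of n] m_le by linarith
  next
    case False
    then obtain l where n: "n = l + m" and "l < n"
      using assms(4) by (metis add.commute le_add_diff_inverse less_add_same_cancel1 less_imp_le_nat not_le)
    have "(\<Sum>k<n. a k) = (\<Sum>k<m. a k) + (\<Sum>k<l. a (k + m))"
      unfolding n by (induction l) (simp_all add: add.commute)
    also have "\<dots> \<le> m + c * (\<Sum>k<l. a k)"
      using block[of m] assms(3) by (intro add_mono) (auto simp: sum_distrib_left intro: sum_mono)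
    also have "\<dots> \<le> m + c * (m / (1 - c))"
      using mult_left_mono[OF less[OF \<open>l < n\<close>] assms(5)] by simp
    also have "\<dots> = m / (1 - c)"
      using assms(6) by (simp add: field_simps)
    finally show ?thesis .
  qed
qed

text \<open>For \<open>k \<ge> 1\<close>, \<open>survival G s k $ p\<close> is the probability that the chain started in \<open>p\<close>
  avoids \<open>s\<close> at all times \<open>0, \<dots>, k\<close>; \<open>likely_absorbed G s k\<close> is the set of states from which
  \<open>s\<close> is hit within \<open>k\<close> steps with probability at least \<open>ymin G ^ k\<close>.\<close>

definition killed :: "real^'q^'q \<Rightarrow> 'q \<Rightarrow> real^'q^'q" where
  "killed G s = (\<chi> p q. if p = s \<or> q = s then 0 else G $ p $ q)"

definition survival :: "real^'q::finite^'q \<Rightarrow> 'q \<Rightarrow> nat \<Rightarrow> real^'q" where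
  "survival G s k = matpow (killed G s) k *v 1"

definition likely_absorbed :: "real^'q::finite^'q \<Rightarrow> 'q \<Rightarrow> nat \<Rightarrow> 'q set" where
  "likely_absorbed G s k = {p. survival G s k $ p \<le> 1 - ymin G ^ k}"

lemma survival_0 [simp]: "survival G s 0 = 1"
  by (simp add: survival_def)

lemma survival_Suc: "survival G s (Suc k) = killed G s *v survival G s k"
  by (simp add: survival_def matpow_Suc_mult_vec)

lemma survival_Suc_sink: "survival G s (Suc k) $ s = 0"
  by (simp add: survival_Suc matrix_vector_mult_def killed_def)

lemma sum_survival_Suc:
  "(\<Sum>k<Suc n. survival G s k) = 1 + killed G s *v (\<Sum>k<n. survival G s k)"
  unfolding survival_def by (rule sum_matpow_Suc_mult_vec)

context
  fixes G :: "real^'q::finite^'q" and s :: 'q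
  assumes stochastic: "stochastic G"
begin

lemma killed_nonneg: "0 \<le> killed G s $ p $ q"
  by (simp add: killed_def stochastic_nonneg[OF stochastic])

lemma killed_le: "killed G s $ p $ q \<le> G $ p $ q"
  by (simp add: killed_def stochastic_nonneg[OF stochastic])

lemma survival_nonneg: "0 \<le> survival G s k $ p"
  by (induction k arbitrary: p)
    (auto simp: survival_Suc matrix_vector_mult_def killed_nonneg intro!: sum_nonneg)

lemma survival_le_one: "survival G s k $ p \<le> 1"
proof (induction k arbitrary: p)
  case (Suc k)
  have "survival G s (Suc k) $ p \<le> (killed G s *v 1) $ p"
    unfolding survival_Suc using Suc by (intro nonneg_matrix_mult_vec_mono killed_nonneg) simp
  also have "\<dots> \<le> (\<Sum>q\<in>UNIV. G $ p $ q)"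
    by (simp add: matrix_vector_mult_def killed_le sum_mono)
  finally show ?case by (simp add: stochastic_row_sum[OF stochastic])
qed simp

lemma survival_add_le:
  assumes "\<And>q. survival G s m $ q \<le> c"
  shows "survival G s (k + m) $ p \<le> c * survival G s k $ p"
proof (induction k arbitrary: p)
  case (Suc k)
  have "survival G s (Suc k + m) $ p \<le> (killed G s *v (\<chi> q. c * survival G s k $ q)) $ p"
    unfolding add_Suc survival_Suc using Suc by (intro nonneg_matrix_mult_vec_mono killed_nonneg) simp
  also have "\<dots> = c * survival G s (Suc k) $ p"
    by (simp add: survival_Suc matrix_vector_mult_def sum_distrib_left algebra_simps)
  finally show ?case .
qed (simp add: assms)

lemma survival_Suc_le: "survival G s (Suc k) $ p \<le> survival G s k $ p"
  using survival_add_le[of 1 1 k p] survival_le_one by simp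

lemma survival_Suc_le_edge:
  assumes "p \<noteq> s"
  shows "survival G s (Suc k) $ p \<le> 1 - G $ p $ q * (1 - survival G s k $ q)"
proof -
  let ?u = "survival G s k"
  have "survival G s (Suc k) $ p \<le> (\<Sum>q'\<in>UNIV. G $ p $ q' * ?u $ q')"
    unfolding survival_Suc matrix_vector_mult_def
    by (auto intro!: sum_mono mult_right_mono killed_le survival_nonneg)
  also have "\<dots> = 1 - (\<Sum>q'\<in>UNIV. G $ p $ q' * (1 - ?u $ q'))"
    by (simp add: right_diff_distrib sum_subtractf stochastic_row_sum[OF stochastic])
  also have "\<dots> \<le> 1 - G $ p $ q * (1 - ?u $ q)"
    using stochastic_nonneg[OF stochastic] survival_le_one
    by (intro diff_left_mono member_le_sum) auto
  finally show ?thesis .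
qed

lemma likely_absorbed_mono: "likely_absorbed G s k \<subseteq> likely_absorbed G s (Suc k)"
proof
  fix p
  assume "p \<in> likely_absorbed G s k"
  moreover have "ymin G ^ Suc k \<le> ymin G ^ k"
    using stochastic_ymin_pos[OF stochastic] stochastic_ymin_le_one[OF stochastic]
    by (simp add: mult_left_le_one_le)
  ultimately show "p \<in> likely_absorbed G s (Suc k)"
    using survival_Suc_le[of k p] unfolding likely_absorbed_def mem_Collect_eq by linarith
qed

lemma sink_likely_absorbed: "s \<in> likely_absorbed G s (Suc k)"
  using stochastic_ymin_pos[OF stochastic] stochastic_ymin_le_one[OF stochastic]
    power_le_one[of "ymin G" "Suc k"]
  by (simp add: likely_absorbed_def survival_Suc_sink)

lemma likely_absorbed_predecessor:
  assumes "0 < G $ p $ q" and "q \<in> likely_absorbed G s k"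
  shows "p \<in> likely_absorbed G s (Suc k)"
proof (cases "p = s")
  case False
  have "survival G s (Suc k) $ p \<le> 1 - G $ p $ q * (1 - survival G s k $ q)"
    using False by (rule survival_Suc_le_edge)
  also have "\<dots> \<le> 1 - G $ p $ q * ymin G ^ k"
    using assms unfolding likely_absorbed_def by (simp add: mult_left_mono)
  also have "\<dots> \<le> 1 - ymin G ^ Suc k"
    using ymin_le[of G p q] assms(1) stochastic_ymin_pos[OF stochastic]
    by (simp add: mult_right_mono)
  finally show ?thesis unfolding likely_absorbed_def by simp
qed (simp add: sink_likely_absorbed)

context
  assumes reach_sink: "\<And>p. (mat_edge G)\<^sup>*\<^sup>* p s"
begin

text \<open>A set that stops growing contains \<open>s\<close> and is closed under predecessors, so it is
  everything.\<close>

lemma likely_absorbed_grows: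
  "likely_absorbed G s (Suc k) = UNIV \<or> Suc k \<le> card (likely_absorbed G s (Suc k))"
proof (induction k)
  case 0
  then show ?case using sink_likely_absorbed[of 0] by (auto simp: card_gt_0_iff Suc_le_eq)
next
  case (Suc k)
  let ?L = "likely_absorbed G s"
  show ?case
  proof (cases "?L (Suc (Suc k)) = ?L (Suc k)")
    case True
    have "p \<in> ?L (Suc k)" for p
      using reach_sink[of p]
    proof (induction rule: converse_rtranclp_induct)
      case (step p q)
      then show ?case
        using likely_absorbed_predecessor True unfolding mat_edge_def by blast
    qed (rule sink_likely_absorbed)
    then show ?thesis using likely_absorbed_mono[of "Suc k"] by auto
  next
    case False
    then have "card (?L (Suc k)) < card (?L (Suc (Suc k)))"
      using likely_absorbed_mono[of "Suc k"] by (auto intro: psubset_card_mono)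
    then show ?thesis using Suc likely_absorbed_mono[of "Suc k"] by auto
  qed
qed

lemma survival_CARD_le: "survival G s CARD('q) $ p \<le> 1 - ymin G ^ CARD('q)"
proof -
  obtain m where m: "CARD('q) = Suc m"
    using not0_implies_Suc[of "CARD('q)"] by auto
  have "card (likely_absorbed G s (Suc m)) \<le> Suc m"
    unfolding m[symmetric] by (rule card_mono) simp_all
  then have "likely_absorbed G s (Suc m) = UNIV"
    using likely_absorbed_grows[of m] card_eq_UNIV_imp_eq_UNIV m by fastforce
  then show ?thesis unfolding likely_absorbed_def m by auto
qed

lemma sum_survival_le: "(\<Sum>k<n. survival G s k $ p) \<le> CARD('q) / ymin G ^ CARD('q)"
proof -
  have "0 < ymin G ^ CARD('q)" and "ymin G ^ CARD('q) \<le> 1"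
    using stochastic_ymin_pos[OF stochastic] stochastic_ymin_le_one[OF stochastic]
    by (simp_all add: power_le_one)
  then show ?thesis
    using sum_le_of_periodic_decay[of "\<lambda>k. survival G s k $ p" "CARD('q)" "1 - ymin G ^ CARD('q)"]
      survival_nonneg survival_le_one survival_add_le[OF survival_CARD_le]
    by simp
qed

end

lemma sum_matpow_deviation_le:
  "\<bar>(\<Sum>i<n. matpow G i *v r) $ p - (\<Sum>i<n. matpow G i *v r) $ s\<bar>
     \<le> diff_norm r * (\<Sum>k<n. survival G s k $ p)"
proof (induction n arbitrary: p)
  case (Suc n)
  let ?F = "\<Sum>i<n. matpow G i *v r"
  let ?e = "\<chi> q. ?F $ q - ?F $ s"
  show ?case
  proof (cases "p = s")
    case True
    have "0 \<le> diff_norm r * (\<Sum>k<Suc n. survival G s k $ p)"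
      by (intro mult_nonneg_nonneg diff_norm_nonneg sum_nonneg survival_nonneg)
    with True show ?thesis by simp
  next
    case False
    have Fp: "(\<Sum>i<Suc n. matpow G i *v r) $ p = r $ p + (G *v ?F) $ p"
      unfolding sum_matpow_Suc_mult_vec by simp
    have Fs: "(\<Sum>i<Suc n. matpow G i *v r) $ s = ?F $ s + (matpow G n *v r) $ s"
      by simp
    have "(G *v ?F) $ p - ?F $ s = (\<Sum>q\<in>UNIV. G $ p $ q * ?e $ q)"
      by (simp add: matrix_vector_mult_def right_diff_distrib sum_subtractf
          stochastic_row_sum[OF stochastic] flip: sum_distrib_right)
    also have "\<dots> = (killed G s *v ?e) $ p"
      unfolding matrix_vector_mult_component[of "killed G s"]
      by (rule sum.cong) (auto simp: killed_def False)
    finally have "(\<Sum>i<Suc n. matpow G i *v r) $ p - (\<Sum>i<Suc n. matpow G i *v r) $ s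
        = (r $ p - (matpow G n *v r) $ s) + (killed G s *v ?e) $ p"
      unfolding Fp Fs by linarith
    also have "\<bar>\<dots>\<bar> \<le> diff_norm r + (killed G s *v (\<chi> q. diff_norm r * (\<Sum>k<n. survival G s k $ q))) $ p"
      using stochastic_matpow_mult_vec_dist[OF stochastic] Suc killed_nonneg
      by (intro order_trans[OF abs_triangle_ineq] add_mono abs_nonneg_matrix_mult_vec_le) simp_all
    also have "\<dots> = diff_norm r * (\<Sum>k<Suc n. survival G s k $ p)"
      using sum_survival_Suc[where n = n and G = G and s = s]
      by (simp add: matrix_vector_mult_def sum_distrib_left algebra_simps flip: sum_component)
    finally show ?thesis .
  qed
qed simp

end

theorem mainTheorem19:
  fixes G :: "real^'q::finite^'q" and r :: "real^'q" and n :: nat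
  assumes "stochastic G"
    and "\<exists>!S. is_bscc (mat_edge G) S"
  shows "diff_norm (\<Sum>i<n. matpow G i *v r)
           \<le> (10 * real CARD('q) / ymin G ^ CARD('q)) * diff_norm r"
proof -
  let ?F = "\<Sum>i<n. matpow G i *v r"
  let ?B = "real CARD('q) / ymin G ^ CARD('q)"
  obtain s where reach: "\<And>p. (mat_edge G)\<^sup>*\<^sup>* p s"
    using unique_bscc_reachable[OF assms(2)] by blast
  have deviation: "\<bar>?F $ p - ?F $ s\<bar> \<le> diff_norm r * ?B" for p
    using sum_matpow_deviation_le[OF assms(1)]
      mult_left_mono[OF sum_survival_le[OF assms(1) reach] diff_norm_nonneg]
    by (rule order_trans)
  have "\<bar>?F $ p - ?F $ q\<bar> \<le> 2 * diff_norm r * ?B" for p q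
    using deviation[of p] deviation[of q] by linarith
  then have "diff_norm ?F \<le> 2 * diff_norm r * ?B"
    by (rule diff_norm_le)
  also have "\<dots> \<le> 10 * ?B * diff_norm r"
    using mult_nonneg_nonneg[OF diff_norm_nonneg[of r], of ?B] stochastic_ymin_pos[OF assms(1)]
    by (simp add: field_simps)
  finally show ?thesis by simp
qed

end
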